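(* Consider the difference equation $x_k+a_1x_{k-1}+\dots+a_nx_{k-n}=0$, $k\ge n$, with $a_i\in\mathbb R$. There exists an initial condition $x^{(0)}=(x_0,\dots,x_{n-1})$ with $\|x^{(0)}\|_\infty=1$ whose solution satisfies $\max_{k\ge n}|x_k|>1$ if and only if $\sum_{i=1}^n|a_i|>1$. *)

theory Defs
  imports "HOL-Analysis.Analysis"
begin

definition solves_diff_eq :: "nat \<Rightarrow> (nat \<Rightarrow> real) \<Rightarrow> (nat \<Rightarrow> real) \<Rightarrow> bool" where
  "solves_diff_eq n a x \<longleftrightarrow> (\<forall>k\<ge>n. x k + (\<Sum>i=1..n. a i * x (k - i)) = 0)"

definition init_norm :: "nat \<Rightarrow> (nat \<Rightarrow> real) \<Rightarrow> real" where
  "init_norm n x = Max ((\<lambda>i. \<bar>x i\<bar>) ` {0..<n})"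

end

theory Submission
  imports Defs
begin

text \<open>If \<open>\<Sum>|a\<^sub>i| \<le> 1\<close>, every \<open>x\<^sub>k\<close> is a combination of earlier values with total
  absolute weight at most 1, so by strong induction the solution never leaves the sup-norm
  ball of its initial condition.
  Conversely, choosing \<open>x\<^sub>n\<^sub>-\<^sub>i = -sign(a\<^sub>i)\<close> (with values \<open>\<plusminus>1\<close>) makes \<open>x\<^sub>n = \<Sum>|a\<^sub>i|\<close>.\<close>

function diff_eq_solution :: "nat \<Rightarrow> (nat \<Rightarrow> real) \<Rightarrow> (nat \<Rightarrow> real) \<Rightarrow> nat \<Rightarrow> real" where
  "diff_eq_solution n a x0 k =
     (if k < n then x0 k else - (\<Sum>i=1..n. a i * diff_eq_solution n a x0 (k - i)))"
  by auto
termination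
  by (relation "Wellfounded.measure (\<lambda>(n, a, x0, k). k)") auto

declare diff_eq_solution.simps[simp del]

lemma diff_eq_solution_initial:
  "k < n \<Longrightarrow> diff_eq_solution n a x0 k = x0 k"
  by (subst diff_eq_solution.simps) simp

lemma solves_diff_eq_solution: "solves_diff_eq n a (diff_eq_solution n a x0)"
  unfolding solves_diff_eq_def
  by (subst diff_eq_solution.simps) simp

lemma solves_diff_eqD:
  "solves_diff_eq n a x \<Longrightarrow> n \<le> k \<Longrightarrow> x k = - (\<Sum>i=1..n. a i * x (k - i))"
  unfolding solves_diff_eq_def by (simp add: eq_neg_iff_add_eq_0)

lemma abs_le_init_norm: "j < n \<Longrightarrow> \<bar>x j\<bar> \<le> init_norm n x"
  unfolding init_norm_def by (rule Max_ge) auto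

lemma init_norm_eq_one:
  assumes "n \<ge> 1" and "\<And>j. j < n \<Longrightarrow> \<bar>x j\<bar> = 1"
  shows "init_norm n x = 1"
proof -
  have "(\<lambda>i. \<bar>x i\<bar>) ` {0..<n} = {1}"
    using assms by (auto simp: image_iff intro!: exI[of _ 0])
  then show ?thesis unfolding init_norm_def by simp
qed

lemma solves_diff_eq_bounded:
  assumes sol: "solves_diff_eq n a x"
    and init: "\<And>j. j < n \<Longrightarrow> \<bar>x j\<bar> \<le> M"
    and "M \<ge> 0" and coeffs: "(\<Sum>i=1..n. \<bar>a i\<bar>) \<le> 1"
  shows "\<bar>x k\<bar> \<le> M"
proof (induction k rule: less_induct)
  case (less k)
  show ?case
  proof (cases "k < n")
    case True
    then show ?thesis using init by simp
  next
    case False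
    have "\<bar>x k\<bar> \<le> (\<Sum>i=1..n. \<bar>a i * x (k - i)\<bar>)"
      using solves_diff_eqD[OF sol] False by (simp add: sum_abs)
    also have "\<dots> \<le> (\<Sum>i=1..n. \<bar>a i\<bar> * M)"
    proof (rule sum_mono)
      fix i assume "i \<in> {1..n}"
      with False have "\<bar>x (k - i)\<bar> \<le> M" using less by simp
      then show "\<bar>a i * x (k - i)\<bar> \<le> \<bar>a i\<bar> * M"
        by (simp add: abs_mult mult_left_mono)
    qed
    also have "\<dots> \<le> M"
      using coeffs \<open>M \<ge> 0\<close> by (simp add: sum_distrib_right[symmetric] mult_left_le_one_le)
    finally show ?thesis .
  qed
qed

lemma diff_eq_solution_sign_choice:
  fixes n :: nat and a :: "nat \<Rightarrow> real"
  defines "x0 \<equiv> \<lambda>j. if a (n - j) \<ge> 0 then -1 else (1::real)"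
  shows "diff_eq_solution n a x0 n = (\<Sum>i=1..n. \<bar>a i\<bar>)"
proof -
  have "diff_eq_solution n a x0 n = (\<Sum>i=1..n. - (a i * diff_eq_solution n a x0 (n - i)))"
    using solves_diff_eqD[OF solves_diff_eq_solution] by (simp add: sum_negf)
  also have "\<dots> = (\<Sum>i=1..n. \<bar>a i\<bar>)"
  proof (rule sum.cong)
    fix i assume i: "i \<in> {1..n}"
    then have "diff_eq_solution n a x0 (n - i) = x0 (n - i)" and "n - (n - i) = i"
      by (auto intro: diff_eq_solution_initial)
    then show "- (a i * diff_eq_solution n a x0 (n - i)) = \<bar>a i\<bar>"
      unfolding x0_def by auto
  qed simp
  finally show ?thesis .
qed

theorem mainTheorem7:
  fixes n :: nat and a :: "nat \<Rightarrow> real"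
  assumes "n \<ge> 1"
  shows "(\<exists>x. solves_diff_eq n a x \<and> init_norm n x = 1 \<and> (\<exists>k\<ge>n. \<bar>x k\<bar> > 1))
         \<longleftrightarrow> (\<Sum>i=1..n. \<bar>a i\<bar>) > 1"
proof
  assume "\<exists>x. solves_diff_eq n a x \<and> init_norm n x = 1 \<and> (\<exists>k\<ge>n. \<bar>x k\<bar> > 1)"
  then obtain x k where sol: "solves_diff_eq n a x" and norm: "init_norm n x = 1"
    and "\<bar>x k\<bar> > 1"
    by blast
  have "\<bar>x j\<bar> \<le> 1" if "j < n" for j
    using abs_le_init_norm[OF that, of x] norm by simp
  with \<open>\<bar>x k\<bar> > 1\<close> solves_diff_eq_bounded[OF sol, of 1 k]
  show "(\<Sum>i=1..n. \<bar>a i\<bar>) > 1" by fastforce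
next
  assume "(\<Sum>i=1..n. \<bar>a i\<bar>) > 1"
  define x0 where "x0 = (\<lambda>j. if a (n - j) \<ge> 0 then -1 else (1::real))"
  define x where "x = diff_eq_solution n a x0"
  have "init_norm n x = 1"
    using assms by (intro init_norm_eq_one) (simp_all add: x_def x0_def diff_eq_solution_initial)
  moreover have "\<bar>x n\<bar> > 1"
    using \<open>(\<Sum>i=1..n. \<bar>a i\<bar>) > 1\<close> diff_eq_solution_sign_choice
    by (simp add: x_def x0_def)
  ultimately show "\<exists>x. solves_diff_eq n a x \<and> init_norm n x = 1 \<and> (\<exists>k\<ge>n. \<bar>x k\<bar> > 1)"
    using solves_diff_eq_solution[of n a x0] unfolding x_def by blast
qed

end
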